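(* Fix a question $q$ and a reference answer $a^*$. Let $\mathcal{S}$ (solutions) and $\mathcal{A}$ (answers) be countable sets, let $\pi_\theta(\cdot\mid q)$ be a probability distribution on $\mathcal{S}$, and for each $s\in\mathcal{S}$ let $\pi_\theta(\cdot\mid s,q)$ be a probability distribution on $\mathcal{A}$, so that the joint law of $(S,A)$ is $\pi_\theta(a,s\mid q)=\pi_\theta(s\mid q)\,\pi_\theta(a\mid s,q)$. Assume $\Pr(A=a^* )=\sum_{s}\pi_\theta(s\mid q)\pi_\theta(a^*\mid s,q)>0$. Define the conditional expectation reward $$\rho(a^*,a^* )=\mathbb{E}_{s'\sim\pi_\theta(\cdot\mid q)}\big[\pi_\theta(a^*\mid s',q)\,\big|\,A=a^*\big]=\sum_{s'\in\mathcal{S}}\pi_\theta(s'\mid q,a^* )\,\pi_\theta(a^*\mid s',q),$$ where $\pi_\theta(s'\mid q,a^* )=\dfrac{\pi_\theta(s'\mid q)\pi_\theta(a^*\mid s',q)}{\sum_{s''}\pi_\theta(s''\mid q)\pi_\theta(a^*\mid s'',q)}$. Then $$\rho(a^*,a^* )\;\ge\;\mathbb{E}_{s\sim\pi_\theta(\cdot\mid q)}\big[\pi_\theta(a^*\mid s,q)\big],$$ with equality if and only if $\pi_\theta(a^*\mid s,q)$ is constant over all $s$ with $\pi_\theta(s\mid q)>0$.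
   Context: A policy $\pi_\theta$ generates, given a question $q$, a solution $s$ and then an answer $a$; the conditional expectation reward (CER) of a generated answer $a$ with respect to a reference answer $a^*$ is $\rho(a,a^* )=\sum_{s'}\pi_\theta(s'\mid q,a)\,\pi_\theta(a^*\mid s',q)$, defined for answers $a$ with positive marginal probability under the policy. *)

theory Defs
  imports "HOL-Probability.Probability"
begin

text \<open>Policy: Spol = pi(. | q), a pmf on solutions; Apol s = pi(. | s, q), a pmf on answers.\<close>

definition marg_prob :: "'s pmf \<Rightarrow> ('s \<Rightarrow> 'a pmf) \<Rightarrow> 'a \<Rightarrow> real" where
  "marg_prob Spol Apol a = (\<Sum>\<^sub>\<infinity>s. pmf Spol s * pmf (Apol s) a)"

definition post :: "'s pmf \<Rightarrow> ('s \<Rightarrow> 'a pmf) \<Rightarrow> 'a \<Rightarrow> 's \<Rightarrow> real" where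
  "post Spol Apol a s = pmf Spol s * pmf (Apol s) a / marg_prob Spol Apol a"

definition cer :: "'s pmf \<Rightarrow> ('s \<Rightarrow> 'a pmf) \<Rightarrow> 'a \<Rightarrow> 'a \<Rightarrow> real" where
  "cer Spol Apol a astar = (\<Sum>\<^sub>\<infinity>s. post Spol Apol a s * pmf (Apol s) astar)"

end

theory Submission
  imports Defs
begin

text \<open>Writing \<open>f s = \<pi>(a\<^sup>* | s, q)\<close> and \<open>M = E[f]\<close> for its mean under \<open>\<pi>(\<cdot> | q)\<close>, the reward
  is \<open>\<rho>(a\<^sup>*, a\<^sup>*) = E[f\<^sup>2] / M\<close>. Hence \<open>\<rho>(a\<^sup>*, a\<^sup>*) - M = Var f / M \<ge> 0\<close>, and the variance
  vanishes exactly when \<open>f\<close> is almost surely constant, i.e. constant on the support.\<close>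

lemma pmf_has_sum_1: "(pmf p has_sum 1) UNIV"
proof -
  have abs: "Infinite_Set_Sum.abs_summable_on (pmf p) UNIV"
    by (rule pmf_abs_summable)
  have "(pmf p has_sum infsum (pmf p) UNIV) UNIV"
    by (rule has_sum_infsum[OF abs_summable_summable[OF abs_summable_equivalent[THEN iffD2, OF abs]]])
  moreover have "infsum (pmf p) UNIV = 1"
    using infsetsum_infsum[OF abs] infsetsum_pmf_eq_1[of p UNIV] by simp
  ultimately show ?thesis
    by simp
qed

lemma summable_on_pmf_mult_bounded:
  fixes f :: "'a \<Rightarrow> real"
  assumes "\<And>x. \<bar>f x\<bar> \<le> B"
  shows "(\<lambda>x. pmf p x * f x) summable_on UNIV"
proof -
  have summable: "(\<lambda>x. pmf p x * B) summable_on UNIV"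
    by (rule has_sum_imp_summable[OF has_sum_cmult_left[OF pmf_has_sum_1]])
  have bound: "norm (pmf p x * f x) \<le> pmf p x * B" for x
    unfolding real_norm_def abs_mult using assms[of x] by (simp add: mult_left_mono)
  have "Infinite_Sum.abs_summable_on (\<lambda>x. pmf p x * f x) UNIV"
    by (rule Infinite_Sum.abs_summable_on_comparison_test'[OF summable]) (rule bound)
  then show ?thesis
    by (rule abs_summable_summable)
qed

lemma has_sum_pmf_centered_square:
  fixes p :: "'a pmf" and f :: "'a \<Rightarrow> real"
  assumes "\<And>x. \<bar>f x\<bar> \<le> B"
  defines "m \<equiv> \<Sum>\<^sub>\<infinity>x. pmf p x * f x"
  shows "((\<lambda>x. pmf p x * (f x - m)\<^sup>2) has_sum ((\<Sum>\<^sub>\<infinity>x. pmf p x * (f x)\<^sup>2) - m\<^sup>2)) UNIV"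
proof -
  define m2 where "m2 = (\<Sum>\<^sub>\<infinity>x. pmf p x * (f x)\<^sup>2)"
  have "\<bar>(f x)\<^sup>2\<bar> \<le> B\<^sup>2" for x
    using power_mono[OF assms(1)[of x] abs_ge_zero, of 2] by simp
  then have "(\<lambda>x. pmf p x * (f x)\<^sup>2) summable_on UNIV"
    by (rule summable_on_pmf_mult_bounded)
  then have "((\<lambda>x. pmf p x * (f x)\<^sup>2) has_sum m2) UNIV"
    unfolding m2_def by (rule has_sum_infsum)
  moreover have "((\<lambda>x. (-2 * m) * (pmf p x * f x)) has_sum ((-2 * m) * m)) UNIV"
    unfolding m_def
    by (rule has_sum_cmult_right[OF has_sum_infsum[OF summable_on_pmf_mult_bounded[OF assms(1)]]])
  moreover have "((\<lambda>x. m\<^sup>2 * pmf p x) has_sum (m\<^sup>2 * 1)) UNIV"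
    by (rule has_sum_cmult_right[OF pmf_has_sum_1])
  ultimately have "((\<lambda>x. pmf p x * (f x)\<^sup>2 + (-2 * m) * (pmf p x * f x) + m\<^sup>2 * pmf p x)
      has_sum (m2 + (-2 * m) * m + m\<^sup>2 * 1)) UNIV"
    by (intro has_sum_add)
  moreover have "(\<lambda>x. pmf p x * (f x)\<^sup>2 + (-2 * m) * (pmf p x * f x) + m\<^sup>2 * pmf p x) =
      (\<lambda>x. pmf p x * (f x - m)\<^sup>2)"
    by (simp add: fun_eq_iff power2_eq_square algebra_simps)
  moreover have "m2 + (-2 * m) * m + m\<^sup>2 * 1 = m2 - m\<^sup>2"
    by (simp add: power2_eq_square)
  ultimately show ?thesis
    unfolding m2_def by simp
qed

lemma pmf_mean_square_le_second_moment:
  fixes f :: "'a \<Rightarrow> real"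
  assumes "\<And>x. \<bar>f x\<bar> \<le> B"
  shows "(\<Sum>\<^sub>\<infinity>x. pmf p x * f x)\<^sup>2 \<le> (\<Sum>\<^sub>\<infinity>x. pmf p x * (f x)\<^sup>2)"
  using has_sum_nonneg[OF has_sum_pmf_centered_square[OF assms]] by simp

lemma pmf_mean_square_eq_second_moment_iff:
  fixes f :: "'a \<Rightarrow> real"
  assumes "\<And>x. \<bar>f x\<bar> \<le> B"
  shows "(\<Sum>\<^sub>\<infinity>x. pmf p x * f x)\<^sup>2 = (\<Sum>\<^sub>\<infinity>x. pmf p x * (f x)\<^sup>2) \<longleftrightarrow>
         (\<exists>c. \<forall>x. pmf p x > 0 \<longrightarrow> f x = c)"
proof
  define m where "m = (\<Sum>\<^sub>\<infinity>x. pmf p x * f x)"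
  assume "(\<Sum>\<^sub>\<infinity>x. pmf p x * f x)\<^sup>2 = (\<Sum>\<^sub>\<infinity>x. pmf p x * (f x)\<^sup>2)"
  then have centered: "((\<lambda>x. pmf p x * (f x - m)\<^sup>2) has_sum 0) UNIV"
    using has_sum_pmf_centered_square[where p = p and f = f, OF assms] by (simp add: m_def)
  have "f x = m" if "pmf p x > 0" for x
  proof -
    have "pmf p x * (f x - m)\<^sup>2 = 0"
      using centered
      by (intro nonneg_infsum_le_0D[where A = UNIV]) (auto simp: infsumI summable_on_def)
    then show ?thesis
      using that by simp
  qed
  then show "\<exists>c. \<forall>x. pmf p x > 0 \<longrightarrow> f x = c"
    by blast
next
  assume "\<exists>c. \<forall>x. pmf p x > 0 \<longrightarrow> f x = c"
  then obtain c where c: "\<And>x. pmf p x > 0 \<Longrightarrow> f x = c"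
    by blast
  have mean: "pmf p x * f x = c * pmf p x" and square: "pmf p x * (f x)\<^sup>2 = c\<^sup>2 * pmf p x" for x
    using c[of x] pmf_nonneg[of p x] by (cases "pmf p x > 0"; simp)+
  have "(\<Sum>\<^sub>\<infinity>x. pmf p x * f x) = c" and "(\<Sum>\<^sub>\<infinity>x. pmf p x * (f x)\<^sup>2) = c\<^sup>2"
    using infsumI[OF has_sum_cmult_right[OF pmf_has_sum_1]] by (simp_all add: mean square)
  then show "(\<Sum>\<^sub>\<infinity>x. pmf p x * f x)\<^sup>2 = (\<Sum>\<^sub>\<infinity>x. pmf p x * (f x)\<^sup>2)"
    by simp
qed

lemma cer_self_eq:
  "cer Spol Apol a a = (\<Sum>\<^sub>\<infinity>s. pmf Spol s * (pmf (Apol s) a)\<^sup>2) / marg_prob Spol Apol a"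
proof -
  have "cer Spol Apol a a =
      (\<Sum>\<^sub>\<infinity>s. pmf Spol s * (pmf (Apol s) a)\<^sup>2 * inverse (marg_prob Spol Apol a))"
    unfolding cer_def post_def by (simp add: power2_eq_square divide_inverse mult_ac)
  also have "\<dots> = (\<Sum>\<^sub>\<infinity>s. pmf Spol s * (pmf (Apol s) a)\<^sup>2) * inverse (marg_prob Spol Apol a)"
    by (rule infsum_cmult_left')
  finally show ?thesis
    by (simp add: divide_inverse)
qed

theorem theorem1:
  fixes Spol :: "'s::countable pmf" and Apol :: "'s \<Rightarrow> 'a::countable pmf" and astar :: 'a
  assumes "marg_prob Spol Apol astar > 0"
  shows "cer Spol Apol astar astar \<ge> (\<Sum>\<^sub>\<infinity>s. pmf Spol s * pmf (Apol s) astar) \<and>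
         (cer Spol Apol astar astar = (\<Sum>\<^sub>\<infinity>s. pmf Spol s * pmf (Apol s) astar)
         \<longleftrightarrow> (\<exists>c. \<forall>s. pmf Spol s > 0 \<longrightarrow> pmf (Apol s) astar = c))"
proof -
  define M where "M = (\<Sum>\<^sub>\<infinity>s. pmf Spol s * pmf (Apol s) astar)"
  define M2 where "M2 = (\<Sum>\<^sub>\<infinity>s. pmf Spol s * (pmf (Apol s) astar)\<^sup>2)"
  have bounded: "\<bar>pmf (Apol s) astar\<bar> \<le> 1" for s
    by (simp add: pmf_le_1)
  have "M > 0" and "cer Spol Apol astar astar = M2 / M"
    using assms by (simp_all add: M_def M2_def marg_prob_def cer_self_eq)
  moreover have "M\<^sup>2 \<le> M2"
    unfolding M_def M2_def by (rule pmf_mean_square_le_second_moment[OF bounded])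
  moreover have "M\<^sup>2 = M2 \<longleftrightarrow> (\<exists>c. \<forall>s. pmf Spol s > 0 \<longrightarrow> pmf (Apol s) astar = c)"
    unfolding M_def M2_def by (rule pmf_mean_square_eq_second_moment_iff[OF bounded])
  moreover have "M \<le> M2 / M \<longleftrightarrow> M\<^sup>2 \<le> M2" and "M2 / M = M \<longleftrightarrow> M\<^sup>2 = M2"
    using \<open>M > 0\<close> by (auto simp: pos_le_divide_eq divide_eq_eq power2_eq_square)
  ultimately show ?thesis
    unfolding M_def[symmetric] by simp
qed

end
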